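(* Let $(Y,S,\gamma)$ be a deterministic machine, i.e. there is a measurable function $f\colon Y\times S\to Y$ with $\gamma(\cdot\mid y,s)=\delta_{f(y,s)}$ for all $y\in Y$, $s\in S$. Let $H$ be a standard Borel space and let $\psi_H\colon Y\to P(H)$ and $\kappa\colon H\to P(H\times S)$ be arbitrary Markov kernels. Then $(H,\psi_H,\kappa)$ is a consistent Bayesian filtering interpretation of $\gamma$ if and only if for every $y\in Y$ and all measurable $C\subseteq H$, $A\subseteq S$, $$\psi_{S,H'}(C\times A\mid y)=\int_A \psi_H\big(C\mid f(y,s)\big)\,\psi_S(ds\mid y).$$
   Context: All measurable spaces are standard Borel; $P(X)$ denotes the set of probability measures on $X$, and a Markov kernel $k\colon X\to P(Z)$ is a measurable map, written $k(E\mid x)$ for measurable $E\subseteq Z$. A machine $(Y,S,\gamma)$ consists of measurable spaces $Y$ (states) and $S$ (inputs) and a Markov kernel $\gamma\colon Y\times S\to P(Y)$. Given a measurable space $H$ and Markov kernels $\psi_H\colon Y\to P(H)$, $\kappa\colon H\to P(H\times S)$, define the kernels $\psi_{S,H'}\colon Y\to P(H\times S)$ by $\psi_{S,H'}(E\mid y)=\int_H\kappa(E\mid h)\,\psi_H(dh\mid y)$ and $\psi_S\colon Y\to P(S)$ by $\psi_S(A\mid y)=\psi_{S,H'}(H\times A\mid y)$. The triple $(H,\psi_H,\kappa)$ is a consistent Bayesian filtering interpretation of $\gamma$ if for all $y\in Y$ and all measurable $C\subseteq H$, $A\subseteq S$, $B\subseteq Y$: $$\int_{C\times A}\gamma(B\mid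 y,s)\,\psi_{S,H'}(dh',ds\mid y)=\int_A\int_B\psi_H(C\mid y')\,\gamma(dy'\mid y,s)\,\psi_S(ds\mid y).$$ *)

theory Defs
  imports "HOL-Probability.Probability"
begin

text \<open>Standard Borel space: measurably isomorphic to a Borel subset of the real line
  (Kuratowski's characterisation of standard Borel spaces).\<close>
definition standard_borel :: "'a measure \<Rightarrow> bool" where
  "standard_borel M \<longleftrightarrow>
     (\<exists>B \<in> sets (borel :: real measure). \<exists>f g.
        f \<in> M \<rightarrow>\<^sub>M restrict_space borel B \<and> g \<in> restrict_space borel B \<rightarrow>\<^sub>M M \<and>
        (\<forall>x \<in> space M. g (f x) = x) \<and> (\<forall>r \<in> B. f (g r) = r))"

definition markov_kernel :: "'a measure \<Rightarrow> 'b measure \<Rightarrow> ('a \<Rightarrow> 'b measure) \<Rightarrow> bool" where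
  "markov_kernel X Z k \<longleftrightarrow> k \<in> X \<rightarrow>\<^sub>M prob_algebra Z"

definition psi_SH' :: "('y \<Rightarrow> 'h measure) \<Rightarrow> ('h \<Rightarrow> ('h \<times> 's) measure) \<Rightarrow> 'y \<Rightarrow> ('h \<times> 's) measure" where
  "psi_SH' \<psi>H \<kappa> y = \<psi>H y \<bind> \<kappa>"

definition psi_S :: "'s measure \<Rightarrow> ('y \<Rightarrow> 'h measure) \<Rightarrow> ('h \<Rightarrow> ('h \<times> 's) measure) \<Rightarrow> 'y \<Rightarrow> 's measure" where
  "psi_S S \<psi>H \<kappa> y = distr (psi_SH' \<psi>H \<kappa> y) S snd"

definition consistent_BFI ::
  "'y measure \<Rightarrow> 's measure \<Rightarrow> ('y \<times> 's \<Rightarrow> 'y measure) \<Rightarrow> 'h measure \<Rightarrow>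
   ('y \<Rightarrow> 'h measure) \<Rightarrow> ('h \<Rightarrow> ('h \<times> 's) measure) \<Rightarrow> bool" where
  "consistent_BFI Y S \<gamma> H \<psi>H \<kappa> \<longleftrightarrow>
    (\<forall>y \<in> space Y. \<forall>C \<in> sets H. \<forall>A \<in> sets S. \<forall>B \<in> sets Y.
      (\<integral>p \<in> C \<times> A. measure (\<gamma> (y, snd p)) B \<partial>(psi_SH' \<psi>H \<kappa> y)) =
      (\<integral>s \<in> A. (\<integral>y' \<in> B. measure (\<psi>H y') C \<partial>(\<gamma> (y, s))) \<partial>(psi_S S \<psi>H \<kappa> y)))"

end

theory Submission
  imports Defs
begin

text \<open>For a deterministic machine both sides of the consistency condition collapse:
  integrating against the Dirac measure at f(y,s) turns the set B of next states into the
  preimage condition f(y,s) \<in> B, which can be absorbed into the input set A. Hence the condition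
  for (C, A, B) is the proposed equation for (C, {s \<in> A. f(y,s) \<in> B}); taking B = Y recovers the
  equation for arbitrary (C, A).\<close>

lemma deterministic_preimage_sets:
  assumes "f \<in> Y \<Otimes>\<^sub>M S \<rightarrow>\<^sub>M Y" "y \<in> space Y" "A \<in> sets S" "B \<in> sets Y"
  shows "{s \<in> A. f (y, s) \<in> B} \<in> sets S"
proof -
  have "(\<lambda>s. f (y, s)) \<in> S \<rightarrow>\<^sub>M Y"
    using assms(1,2) by measurable
  moreover have "{s \<in> A. f (y, s) \<in> B} = A \<inter> ((\<lambda>s. f (y, s)) -` B \<inter> space S)"
    using sets.sets_into_space[OF assms(3)] by auto
  ultimately show ?thesis
    using assms(3,4) by (auto intro: measurable_sets)
qed

lemma deterministic_preimage_space:
  assumes "f \<in> Y \<Otimes>\<^sub>M S \<rightarrow>\<^sub>M Y" "y \<in> space Y" "A \<in> sets S"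
  shows "{s \<in> A. f (y, s) \<in> space Y} = A"
  using sets.sets_into_space[OF assms(3)] measurable_space[OF assms(1)] assms(2)
  by (auto simp: space_pair_measure)

lemma set_integral_deterministic_transition:
  assumes space_M: "space M = space (H \<Otimes>\<^sub>M S)"
    and det: "\<forall>s \<in> space S. \<gamma> (y, s) = return Y (f (y, s))"
    and B: "B \<in> sets Y" and CA': "C \<times> {s \<in> A. f (y, s) \<in> B} \<in> sets M"
  shows "(\<integral>p \<in> C \<times> A. measure (\<gamma> (y, snd p)) B \<partial>M) = measure M (C \<times> {s \<in> A. f (y, s) \<in> B})"
proof -
  have "(\<integral>p \<in> C \<times> A. measure (\<gamma> (y, snd p)) B \<partial>M) =
        (\<integral>p. indicator (C \<times> {s \<in> A. f (y, s) \<in> B}) p \<partial>M)"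
    unfolding set_lebesgue_integral_def
  proof (rule Bochner_Integration.integral_cong[OF refl])
    fix p assume "p \<in> space M"
    then obtain h s where "p = (h, s)" "s \<in> space S"
      by (auto simp: space_M space_pair_measure)
    then show "indicator (C \<times> A) p *\<^sub>R measure (\<gamma> (y, snd p)) B =
               indicator (C \<times> {s \<in> A. f (y, s) \<in> B}) p"
      using det B by (auto simp: measure_return indicator_def)
  qed
  also have "\<dots> = measure M (C \<times> {s \<in> A. f (y, s) \<in> B})"
    using sets.sets_into_space[OF CA'] by (simp add: Int_absorb2)
  finally show ?thesis .
qed

lemma set_integral_set_integral_deterministic_transition:
  fixes \<phi> :: "'y \<Rightarrow> real"
  assumes space_Q: "space Q = space S"
    and det: "\<forall>s \<in> space S. \<gamma> (y, s) = return Y (f (y, s))"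
    and f: "f \<in> Y \<Otimes>\<^sub>M S \<rightarrow>\<^sub>M Y" and y: "y \<in> space Y"
    and \<phi>: "\<phi> \<in> borel_measurable Y" and B: "B \<in> sets Y"
  shows "(\<integral>s \<in> A. (\<integral>y' \<in> B. \<phi> y' \<partial>\<gamma> (y, s)) \<partial>Q) =
         (\<integral>s \<in> {s \<in> A. f (y, s) \<in> B}. \<phi> (f (y, s)) \<partial>Q)"
  unfolding set_lebesgue_integral_def
proof (rule Bochner_Integration.integral_cong[OF refl])
  fix s assume "s \<in> space Q"
  then have s: "s \<in> space S" by (simp add: space_Q)
  have "f (y, s) \<in> space Y"
    using measurable_space[OF f] y s by (simp add: space_pair_measure)
  then have "(\<integral>y'. indicator B y' *\<^sub>R \<phi> y' \<partial>\<gamma> (y, s)) = indicator B (f (y, s)) *\<^sub>R \<phi> (f (y, s))"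
    using det s \<phi> B by (simp add: integral_return)
  then show "indicator A s *\<^sub>R (\<integral>y'. indicator B y' *\<^sub>R \<phi> y' \<partial>\<gamma> (y, s)) =
             indicator {s \<in> A. f (y, s) \<in> B} s *\<^sub>R \<phi> (f (y, s))"
    by (simp add: indicator_def)
qed

lemma sets_psi_SH':
  assumes "markov_kernel Y H \<psi>H" "markov_kernel H (H \<Otimes>\<^sub>M S) \<kappa>" "y \<in> space Y"
  shows "sets (psi_SH' \<psi>H \<kappa> y) = sets (H \<Otimes>\<^sub>M S)"
  using assms measurable_space[of \<psi>H Y "prob_algebra H" y]
  unfolding psi_SH'_def markov_kernel_def by (simp add: sets_bind')

lemma consistent_BFI_deterministic_iff:
  assumes f: "f \<in> Y \<Otimes>\<^sub>M S \<rightarrow>\<^sub>M Y"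
    and det: "\<forall>y \<in> space Y. \<forall>s \<in> space S. \<gamma> (y, s) = return Y (f (y, s))"
    and \<psi>H: "markov_kernel Y H \<psi>H" and \<kappa>: "markov_kernel H (H \<Otimes>\<^sub>M S) \<kappa>"
  shows "consistent_BFI Y S \<gamma> H \<psi>H \<kappa> \<longleftrightarrow>
    (\<forall>y \<in> space Y. \<forall>C \<in> sets H. \<forall>A \<in> sets S. \<forall>B \<in> sets Y.
       measure (psi_SH' \<psi>H \<kappa> y) (C \<times> {s \<in> A. f (y, s) \<in> B}) =
       (\<integral>s \<in> {s \<in> A. f (y, s) \<in> B}. measure (\<psi>H (f (y, s))) C \<partial>(psi_S S \<psi>H \<kappa> y)))"
proof -
  note sets_psi_SH' = sets_psi_SH'[OF \<psi>H \<kappa>]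
  have "(\<integral>p \<in> C \<times> A. measure (\<gamma> (y, snd p)) B \<partial>psi_SH' \<psi>H \<kappa> y) =
          (\<integral>s \<in> A. (\<integral>y' \<in> B. measure (\<psi>H y') C \<partial>\<gamma> (y, s)) \<partial>psi_S S \<psi>H \<kappa> y) \<longleftrightarrow>
        measure (psi_SH' \<psi>H \<kappa> y) (C \<times> {s \<in> A. f (y, s) \<in> B}) =
          (\<integral>s \<in> {s \<in> A. f (y, s) \<in> B}. measure (\<psi>H (f (y, s))) C \<partial>psi_S S \<psi>H \<kappa> y)"
    if y: "y \<in> space Y" and C: "C \<in> sets H" and A: "A \<in> sets S" and B: "B \<in> sets Y" for y C A B
  proof -
    have det_y: "\<forall>s \<in> space S. \<gamma> (y, s) = return Y (f (y, s))"
      using det y by blast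
    have "(\<lambda>y'. measure (\<psi>H y') C) \<in> borel_measurable Y"
      using \<psi>H C unfolding markov_kernel_def by measurable
    then have rhs: "(\<integral>s \<in> A. (\<integral>y' \<in> B. measure (\<psi>H y') C \<partial>\<gamma> (y, s)) \<partial>psi_S S \<psi>H \<kappa> y) =
        (\<integral>s \<in> {s \<in> A. f (y, s) \<in> B}. measure (\<psi>H (f (y, s))) C \<partial>psi_S S \<psi>H \<kappa> y)"
      using det_y f y B unfolding psi_S_def by (intro set_integral_set_integral_deterministic_transition) simp_all
    have "C \<times> {s \<in> A. f (y, s) \<in> B} \<in> sets (psi_SH' \<psi>H \<kappa> y)"
      using sets_psi_SH'[OF y] C deterministic_preimage_sets[OF f y A B] by simp
    then have lhs: "(\<integral>p \<in> C \<times> A. measure (\<gamma> (y, snd p)) B \<partial>psi_SH' \<psi>H \<kappa> y) =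
        measure (psi_SH' \<psi>H \<kappa> y) (C \<times> {s \<in> A. f (y, s) \<in> B})"
      using sets_eq_imp_space_eq[OF sets_psi_SH'[OF y]] det_y B
      by (intro set_integral_deterministic_transition)
    show ?thesis
      unfolding lhs rhs ..
  qed
  then show ?thesis
    unfolding consistent_BFI_def by (intro ball_cong refl) simp
qed

theorem mainTheorem1:
  fixes Y :: "'y measure" and S :: "'s measure" and H :: "'h measure"
    and \<gamma> :: "'y \<times> 's \<Rightarrow> 'y measure" and f :: "'y \<times> 's \<Rightarrow> 'y"
    and \<psi>H :: "'y \<Rightarrow> 'h measure" and \<kappa> :: "'h \<Rightarrow> ('h \<times> 's) measure"
  assumes "standard_borel Y" and "standard_borel S" and "standard_borel H"
    and "markov_kernel (Y \<Otimes>\<^sub>M S) Y \<gamma>"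
    and "f \<in> Y \<Otimes>\<^sub>M S \<rightarrow>\<^sub>M Y"
    and "\<forall>y \<in> space Y. \<forall>s \<in> space S. \<gamma> (y, s) = return Y (f (y, s))"
    and "markov_kernel Y H \<psi>H"
    and "markov_kernel H (H \<Otimes>\<^sub>M S) \<kappa>"
  shows "consistent_BFI Y S \<gamma> H \<psi>H \<kappa> \<longleftrightarrow>
    (\<forall>y \<in> space Y. \<forall>C \<in> sets H. \<forall>A \<in> sets S.
       measure (psi_SH' \<psi>H \<kappa> y) (C \<times> A) =
       (\<integral>s \<in> A. measure (\<psi>H (f (y, s))) C \<partial>(psi_S S \<psi>H \<kappa> y)))"
proof -
  note iff = consistent_BFI_deterministic_iff[OF assms(5,6,7,8)]
  show ?thesis
  proof
    assume "consistent_BFI Y S \<gamma> H \<psi>H \<kappa>"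
    with iff have "measure (psi_SH' \<psi>H \<kappa> y) (C \<times> {s \<in> A. f (y, s) \<in> space Y}) =
        (\<integral>s \<in> {s \<in> A. f (y, s) \<in> space Y}. measure (\<psi>H (f (y, s))) C \<partial>psi_S S \<psi>H \<kappa> y)"
      if "y \<in> space Y" "C \<in> sets H" "A \<in> sets S" for y C A
      using that by blast
    then show "\<forall>y \<in> space Y. \<forall>C \<in> sets H. \<forall>A \<in> sets S.
        measure (psi_SH' \<psi>H \<kappa> y) (C \<times> A) =
        (\<integral>s \<in> A. measure (\<psi>H (f (y, s))) C \<partial>psi_S S \<psi>H \<kappa> y)"
      by (simp add: deterministic_preimage_space[OF assms(5)])
  next
    assume "\<forall>y \<in> space Y. \<forall>C \<in> sets H. \<forall>A \<in> sets S.
        measure (psi_SH' \<psi>H \<kappa> y) (C \<times> A) =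
        (\<integral>s \<in> A. measure (\<psi>H (f (y, s))) C \<partial>psi_S S \<psi>H \<kappa> y)"
    then show "consistent_BFI Y S \<gamma> H \<psi>H \<kappa>"
      unfolding iff by (simp add: deterministic_preimage_sets[OF assms(5)])
  qed
qed

end
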